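(* Let $0<p<\infty$ and $D>0$, and let $\Phi:[0,\infty)\to[0,\infty)$ be such that $t\mapsto\Phi(t^{1/p})$ is a Young function satisfying the $\nabla_2$-condition. Then there does not exist any continuous map $\tau:\mathbb{R}\to\mathbb{R}$ such that \[ |\tau^{-1}(E)|\le\left\{\Phi\left(\frac{1}{D|E|^{1/p}}\right)\right\}^{-1} \] holds for all Lebesgue measurable sets $E\subset\mathbb{R}$.
   Context: $|\cdot|$ denotes Lebesgue measure on $\mathbb{R}$. A Young function is a map $\Psi:[0,\infty)\to[0,\infty)$ that is positive on $(0,\infty)$, convex, with $\lim_{t\downarrow0}\Psi(t)=\Psi(0)=0$. A Young function $\Psi$ satisfies the $\nabla_2$-condition if there is a constant $k>1$ with $\Psi(t)\le\frac{1}{2k}\Psi(kt)$ for all $t>0$. Conventions $1/0=\infty$, $\Phi(\infty)=\infty$, $1/\infty=0$ are used when $|E|\in\{0,\infty\}$. *)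

theory Defs
  imports "HOL-Analysis.Analysis"
begin

definition young_function :: "(real \<Rightarrow> real) \<Rightarrow> bool" where
  "young_function \<Psi> \<longleftrightarrow>
     (\<forall>t>0. \<Psi> t > 0) \<and> convex_on {0..} \<Psi> \<and> \<Psi> 0 = 0 \<and> (\<Psi> \<longlongrightarrow> 0) (at_right 0)"

definition nabla2 :: "(real \<Rightarrow> real) \<Rightarrow> bool" where
  "nabla2 \<Psi> \<longleftrightarrow> (\<exists>k>1. \<forall>t>0. \<Psi> t \<le> 1 / (2 * k) * \<Psi> (k * t))"

text \<open>The bound  {\<Phi>(1/(D m^(1/p)))}^(-1)  for m = |E|, with the conventions
  1/0 = \<infinity>, \<Phi>(\<infinity>) = \<infinity>, 1/\<infinity> = 0: it is 0 if m = 0 and \<infinity> if m = \<infinity>.\<close>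
definition orlicz_bound :: "(real \<Rightarrow> real) \<Rightarrow> real \<Rightarrow> real \<Rightarrow> ennreal \<Rightarrow> ennreal" where
  "orlicz_bound \<Phi> p D m =
     (if m = 0 then 0
      else if m = \<infinity> then \<infinity>
      else ennreal (1 / \<Phi> (1 / (D * enn2real m powr (1 / p)))))"

end

theory Submission
  imports Defs
begin

text \<open>Write \<open>\<Psi> t = \<Phi> (t powr (1/p))\<close> and let \<open>k > 1\<close> be its \<open>\<nabla>\<^sub>2\<close>-constant. A continuous \<open>\<tau>\<close>
  with the stated bound cannot be constant, because the preimage of a point, a null set, would be
  all of \<open>\<real>\<close>. Hence for some \<open>c < d\<close> the preimage of \<open>(c, d)\<close> is a nonempty open set and has
  positive measure. Cover \<open>(c, d)\<close> by about \<open>k\<^sup>j\<close> closed intervals of length \<open>(d - c) / k\<^sup>j\<close>: the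
  preimage of each has measure at most \<open>1 / \<Psi> (k\<^sup>j a)\<close> with \<open>a = 1 / (D\<^sup>p (d - c))\<close>, and iterating
  \<open>\<nabla>\<^sub>2\<close> gives \<open>\<Psi> (k\<^sup>j a) \<ge> (2k)\<^sup>j \<Psi> a\<close>. So the preimage of \<open>(c, d)\<close> has measure at most
  \<open>2 / (2\<^sup>j \<Psi> a)\<close> for every \<open>j\<close>, which is absurd.\<close>

lemma nabla2_iterate:
  fixes \<Psi> :: "real \<Rightarrow> real"
  assumes "k > 1" and "\<forall>t>0. \<Psi> t \<le> 1 / (2 * k) * \<Psi> (k * t)" and "a > 0"
  shows "(2 * k) ^ j * \<Psi> a \<le> \<Psi> (k ^ j * a)"
proof (induction j)
  case 0
  then show ?case by simp
next
  case (Suc j)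
  have "(2 * k) ^ Suc j * \<Psi> a = 2 * k * ((2 * k) ^ j * \<Psi> a)" by simp
  also have "\<dots> \<le> 2 * k * \<Psi> (k ^ j * a)" using Suc assms(1) by simp
  also have "\<dots> \<le> \<Psi> (k * (k ^ j * a))"
    using assms(2)[rule_format, of "k ^ j * a"] assms(1,3) by (simp add: field_simps)
  finally show ?case by (simp add: mult.assoc)
qed

lemma emeasure_le_of_nat_mult_cover:
  assumes "U \<subseteq> (\<Union>i<n. A i)" and "\<And>i. i < n \<Longrightarrow> A i \<in> sets M"
    and "\<And>i. i < n \<Longrightarrow> emeasure M (A i) \<le> B"
  shows "emeasure M U \<le> of_nat n * B"
proof -
  have "emeasure M U \<le> emeasure M (\<Union>i<n. A i)"
    using assms by (intro emeasure_mono) auto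
  also have "\<dots> \<le> (\<Sum>i<n. emeasure M (A i))"
    using assms by (intro emeasure_subadditive_finite) auto
  also have "\<dots> \<le> (\<Sum>i<n. B)"
    using assms by (intro sum_mono) auto
  finally show ?thesis by simp
qed

lemma greaterThanLessThan_subset_UN_steps:
  fixes c h N :: real
  assumes "h > 0"
  shows "{c<..<c + N * h} \<subseteq> (\<Union>i<nat \<lceil>N\<rceil>. {c + real i * h .. c + real i * h + h})"
proof
  fix x
  assume x: "x \<in> {c<..<c + N * h}"
  define q where "q = (x - c) / h"
  have "0 < q" and "q < N"
    using x assms by (auto simp: q_def field_simps)
  define i where "i = nat \<lfloor>q\<rfloor>"
  have i: "real i \<le> q" "q < real i + 1"
    using \<open>0 < q\<close> by (simp_all add: i_def)
  have "i < nat \<lceil>N\<rceil>"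
    using i \<open>q < N\<close> by linarith
  moreover have "x \<in> {c + real i * h .. c + real i * h + h}"
    using i assms by (auto simp: q_def field_simps)
  ultimately show "x \<in> (\<Union>i<nat \<lceil>N\<rceil>. {c + real i * h .. c + real i * h + h})"
    by blast
qed

lemma orlicz_bound_ennreal:
  assumes "0 < p" and "0 < D" and "0 < h"
  shows "orlicz_bound \<Phi> p D (ennreal h) = ennreal (1 / \<Phi> ((1 / (D powr p * h)) powr (1 / p)))"
proof -
  have "(1 / (D powr p * h)) powr (1 / p) = 1 / (D * h powr (1 / p))"
    using assms by (simp add: powr_divide powr_mult powr_powr)
  then show ?thesis
    using assms by (simp add: orlicz_bound_def)
qed

lemma continuous_vimage_closed_lebesgue:
  fixes f :: "'a::euclidean_space \<Rightarrow> 'b::topological_space"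
  assumes "continuous_on UNIV f" and "closed S"
  shows "f -` S \<in> sets lebesgue"
  using assms by (simp add: continuous_closed_vimage continuous_on_eq_continuous_at)

lemma continuous_nonconstant_vimage_interval_pos:
  fixes \<tau> :: "real \<Rightarrow> real"
  assumes cont: "continuous_on UNIV \<tau>" and "\<tau> x \<noteq> \<tau> y"
  obtains c d where "c < d" and "0 < emeasure lebesgue (\<tau> -` {c<..<d})"
proof
  define c where "c = min (\<tau> x) (\<tau> y)"
  define d where "d = max (\<tau> x) (\<tau> y)"
  show "c < d"
    using assms(2) by (auto simp: c_def d_def)
  have "{c..d} \<subseteq> range \<tau>"
    using connected_continuous_image[OF cont]
    by (intro connected_contains_Icc) (auto simp: c_def d_def min_def max_def)
  moreover have "(c + d) / 2 \<in> {c..d}"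
    using \<open>c < d\<close> by simp
  ultimately obtain u where "\<tau> u = (c + d) / 2"
    by (metis imageE subsetD)
  then have "u \<in> \<tau> -` {c<..<d}"
    using \<open>c < d\<close> by simp
  then have "\<tau> -` {c<..<d} \<noteq> {}"
    by blast
  moreover have "open (\<tau> -` {c<..<d})"
    using cont by (intro continuous_imp_open_vimage) auto
  ultimately have "emeasure lebesgue (\<tau> -` {c<..<d}) \<noteq> 0"
    using open_not_negligible negligible_iff_emeasure0 borel_open sets_lborel by blast
  then show "0 < emeasure lebesgue (\<tau> -` {c<..<d})"
    by (simp add: zero_less_iff_neq_zero)
qed

lemma emeasure_vimage_le_nabla2:
  fixes \<tau> \<Psi> :: "real \<Rightarrow> real"
  assumes cont: "continuous_on UNIV \<tau>"
    and k: "k > 1" "\<forall>t>0. \<Psi> t \<le> 1 / (2 * k) * \<Psi> (k * t)"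
    and \<Psi>_pos: "\<forall>t>0. 0 < \<Psi> t" and "0 < A" and "c < d"
    and piece: "\<And>x h. 0 < h \<Longrightarrow>
      emeasure lebesgue (\<tau> -` {x..x + h}) \<le> ennreal (1 / \<Psi> (1 / (A * h)))"
  shows "emeasure lebesgue (\<tau> -` {c<..<d}) \<le> ennreal (2 / \<Psi> (1 / (A * (d - c))) / 2 ^ j)"
proof -
  define a where "a = 1 / (A * (d - c))"
  define N where "N = k ^ j"
  \<comment> \<open>pieces of length exactly \<open>(d - c) / k\<^sup>j\<close>, the last one possibly overhanging \<open>d\<close>,
    so that no monotonicity of \<open>\<Psi>\<close> is needed\<close>
  define h where "h = (d - c) / N"
  have "a > 0" "N \<ge> 1" "h > 0"
    using \<open>0 < A\<close> \<open>c < d\<close> k(1) by (simp_all add: a_def N_def h_def)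
  have "\<Psi> a > 0" "\<Psi> (N * a) > 0"
    using \<Psi>_pos \<open>a > 0\<close> \<open>N \<ge> 1\<close> by simp_all
  have "d = c + N * h"
    using \<open>N \<ge> 1\<close> by (simp add: h_def)
  then have "{c<..<d} \<subseteq> (\<Union>i<nat \<lceil>N\<rceil>. {c + real i * h .. c + real i * h + h})"
    using greaterThanLessThan_subset_UN_steps[OF \<open>h > 0\<close>] by simp
  then have "\<tau> -` {c<..<d} \<subseteq> (\<Union>i<nat \<lceil>N\<rceil>. \<tau> -` {c + real i * h .. c + real i * h + h})"
    by blast
  moreover have "1 / (A * h) = N * a"
    using \<open>N \<ge> 1\<close> \<open>c < d\<close> by (simp add: a_def h_def)
  ultimately have "emeasure lebesgue (\<tau> -` {c<..<d}) \<le> of_nat (nat \<lceil>N\<rceil>) * ennreal (1 / \<Psi> (N * a))"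
    using piece[OF \<open>h > 0\<close>] cont
    by (intro emeasure_le_of_nat_mult_cover)
       (auto intro: continuous_vimage_closed_lebesgue)
  also have "\<dots> = ennreal (real (nat \<lceil>N\<rceil>) / \<Psi> (N * a))"
    by (simp add: ennreal_of_nat_eq_real_of_nat ennreal_mult'[symmetric])
  also have "\<dots> \<le> ennreal (2 / \<Psi> a / 2 ^ j)"
  proof (rule ennreal_leI)
    have "(2 * k) ^ j * \<Psi> a \<le> \<Psi> (N * a)"
      using nabla2_iterate[OF k \<open>a > 0\<close>] by (simp add: N_def)
    moreover have "real (nat \<lceil>N\<rceil>) \<le> 2 * N"
      using \<open>N \<ge> 1\<close> by linarith
    ultimately have "real (nat \<lceil>N\<rceil>) / \<Psi> (N * a) \<le> 2 * N / ((2 * k) ^ j * \<Psi> a)"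
      using \<open>\<Psi> a > 0\<close> \<open>\<Psi> (N * a) > 0\<close> k(1)
      by (intro frac_le) auto
    also have "\<dots> = 2 / \<Psi> a / 2 ^ j"
      using k(1) by (simp add: N_def power_mult_distrib)
    finally show "real (nat \<lceil>N\<rceil>) / \<Psi> (N * a) \<le> 2 / \<Psi> a / 2 ^ j" .
  qed
  finally show ?thesis by (simp add: a_def)
qed

lemma ennreal_eq_0_if_le_divide_power_2:
  fixes x :: ennreal
  assumes "\<And>j. x \<le> ennreal (C / 2 ^ j)"
  shows "x = 0"
proof -
  have "(\<lambda>j. ennreal (C / 2 ^ j)) \<longlonglongrightarrow> ennreal 0"
    by (intro tendsto_ennrealI LIMSEQ_divide_realpow_zero) simp
  then have "x \<le> 0"
    using assms by (intro LIMSEQ_le_const) auto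
  then show ?thesis by simp
qed

theorem proposition5p2:
  fixes p D :: real and \<Phi> :: "real \<Rightarrow> real"
  assumes "0 < p" and "0 < D"
    and "\<forall>t\<ge>0. \<Phi> t \<ge> 0"
    and "young_function (\<lambda>t. \<Phi> (t powr (1 / p)))"
    and "nabla2 (\<lambda>t. \<Phi> (t powr (1 / p)))"
  shows "\<not> (\<exists>\<tau> :: real \<Rightarrow> real. continuous_on UNIV \<tau> \<and>
            (\<forall>E \<in> sets lebesgue. \<tau> -` E \<in> sets lebesgue \<longrightarrow>
               emeasure lebesgue (\<tau> -` E) \<le> orlicz_bound \<Phi> p D (emeasure lebesgue E)))"
proof
  assume "\<exists>\<tau> :: real \<Rightarrow> real. continuous_on UNIV \<tau> \<and>
            (\<forall>E \<in> sets lebesgue. \<tau> -` E \<in> sets lebesgue \<longrightarrow>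
               emeasure lebesgue (\<tau> -` E) \<le> orlicz_bound \<Phi> p D (emeasure lebesgue E))"
  then obtain \<tau> :: "real \<Rightarrow> real" where cont: "continuous_on UNIV \<tau>" and
    bound_lebesgue: "\<And>E. E \<in> sets lebesgue \<Longrightarrow> \<tau> -` E \<in> sets lebesgue \<Longrightarrow>
      emeasure lebesgue (\<tau> -` E) \<le> orlicz_bound \<Phi> p D (emeasure lebesgue E)"
    by blast
  have bound: "emeasure lebesgue (\<tau> -` E) \<le> orlicz_bound \<Phi> p D (emeasure lebesgue E)"
    if "closed E" for E
    using continuous_vimage_closed_lebesgue[OF cont that] that by (intro bound_lebesgue) auto
  define \<Psi> where "\<Psi> = (\<lambda>t. \<Phi> (t powr (1 / p)))"
  obtain k where k: "k > 1" "\<forall>t>0. \<Psi> t \<le> 1 / (2 * k) * \<Psi> (k * t)"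
    using assms(5) by (auto simp: nabla2_def \<Psi>_def)
  have \<Psi>_pos: "\<forall>t>0. 0 < \<Psi> t"
    using assms(4) by (simp add: young_function_def \<Psi>_def)
  have piece: "emeasure lebesgue (\<tau> -` {x..x + h}) \<le> ennreal (1 / \<Psi> (1 / (D powr p * h)))"
    if "0 < h" for x h
    using bound[of "{x..x + h}"] orlicz_bound_ennreal[OF assms(1,2) that] that
    by (simp add: \<Psi>_def)
  have "\<exists>x. \<tau> x \<noteq> \<tau> 0"
  proof (rule ccontr)
    assume "\<nexists>x. \<tau> x \<noteq> \<tau> 0"
    then have "\<tau> -` {\<tau> 0} = UNIV" by auto
    then show False
      using bound[of "{\<tau> 0}"] by (simp add: orlicz_bound_def)
  qed
  then obtain c d where "c < d" and pos: "0 < emeasure lebesgue (\<tau> -` {c<..<d})"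
    using continuous_nonconstant_vimage_interval_pos[OF cont] by metis
  have "emeasure lebesgue (\<tau> -` {c<..<d}) = 0"
  proof (rule ennreal_eq_0_if_le_divide_power_2)
    show "emeasure lebesgue (\<tau> -` {c<..<d}) \<le> ennreal (2 / \<Psi> (1 / (D powr p * (d - c))) / 2 ^ j)"
      for j
      by (rule emeasure_vimage_le_nabla2[OF cont k \<Psi>_pos _ \<open>c < d\<close> piece]) (use assms(2) in simp)
  qed
  with pos show False by simp
qed

end
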